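(* For each $n\ge1$, there are exactly $n$ pairwise non-isomorphic digraphs whose $H$-spectrum equals that of $\overleftrightarrow{K_n}$, namely $\overleftrightarrow{K_n}$ and $Y_{a,n-a}$ for $a=1,\dots,n-1$.
   Context: A digraph has a finite vertex set and an arc set of ordered pairs of distinct vertices; $\{x,y\}$ is a digon if both $xy,yx$ are arcs. $H(X)$ has $(u,v)$-entry $1$ if $uv$ and $vu$ are arcs, $i$ if only $uv$ is an arc, $-i$ if only $vu$ is an arc, and $0$ otherwise; the $H$-spectrum is the multiset of eigenvalues of $H(X)$. $\overleftrightarrow{K_n}$ is the complete digraph on $n$ vertices (every pair of vertices forms a digon), so $H(\overleftrightarrow{K_n})$ is the adjacency matrix of $K_n$. For $1\le a\le n-1$, $Y_{a,n-a}$ is the digraph on a vertex set $A\cup B$ with $|A|=a$, $|B|=n-a$, in which every pair inside $A$ and every pair inside $B$ forms a digon, and for every $u\in A$, $v\in B$ there is the single arc $uv$ (and not $vu$). *)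

theory Defs
  imports "Jordan_Normal_Form.Char_Poly"
begin

definition is_digraph :: "nat \<Rightarrow> (nat \<times> nat) set \<Rightarrow> bool" where
  "is_digraph n E \<longleftrightarrow> E \<subseteq> {0..<n} \<times> {0..<n} \<and> (\<forall>v. (v, v) \<notin> E)"

definition herm_adj :: "nat \<Rightarrow> (nat \<times> nat) set \<Rightarrow> complex mat" where
  "herm_adj n E = mat n n (\<lambda>(u, v).
      if (u, v) \<in> E \<and> (v, u) \<in> E then 1
      else if (u, v) \<in> E then \<i>
      else if (v, u) \<in> E then - \<i>
      else 0)"

definition H_spectrum :: "nat \<Rightarrow> (nat \<times> nat) set \<Rightarrow> complex multiset" where
  "H_spectrum n E = proots (char_poly (herm_adj n E))"

definition digraph_iso :: "nat \<Rightarrow> (nat \<times> nat) set \<Rightarrow> (nat \<times> nat) set \<Rightarrow> bool" where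
  "digraph_iso n E F \<longleftrightarrow>
     (\<exists>f. bij_betw f {0..<n} {0..<n} \<and>
          (\<forall>u\<in>{0..<n}. \<forall>v\<in>{0..<n}. (u, v) \<in> E \<longleftrightarrow> (f u, f v) \<in> F))"

definition complete_digraph :: "nat \<Rightarrow> (nat \<times> nat) set" where
  "complete_digraph n = {(u, v). u < n \<and> v < n \<and> u \<noteq> v}"

text \<open>Y_{a,n-a}: A = {0..<a}, B = {a..<n}; digons inside A and inside B,
  single arcs from A to B.\<close>
definition Y_digraph :: "nat \<Rightarrow> nat \<Rightarrow> (nat \<times> nat) set" where
  "Y_digraph a n = {(u, v). u < n \<and> v < n \<and> u \<noteq> v \<and>
      ((u < a \<and> v < a) \<or> (a \<le> u \<and> a \<le> v) \<or> (u < a \<and> a \<le> v))}"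

end

theory Submission
  imports Defs "Jordan_Normal_Form.Schur_Decomposition"
begin

text \<open>The spectrum of \<open>H(K_n)\<close> consists of \<open>n - 1\<close> and \<open>-1\<close>, so for a digraph cospectral with
  \<open>K_n\<close> the Hermitian matrix \<open>G = H + I\<close> has only the eigenvalues \<open>0\<close> and \<open>n\<close>, which forces
  \<open>G\<^sup>2 = n G\<close>. The diagonal of this identity says that the entries of \<open>G\<close>, all in
  \<open>{0, 1, \<i>, -\<i>}\<close>, are unimodular, and equality in the triangle inequality for the remaining
  entries gives \<open>G = v v\<^sup>*\<close>. After scaling, \<open>v\<close> takes the values \<open>1\<close> and \<open>\<i>\<close>, and reading the
  arcs off \<open>G\<close> shows the digraph is \<open>Y\<close> with the vertices where \<open>v = \<i>\<close> as its tail part.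
  Conversely, conjugating \<open>H(K_n)\<close> by the diagonal matrix \<open>diag(v)\<close> yields \<open>H(Y_{a,n-a})\<close>.
  The number of tails of single arcs, which is \<open>a\<close> for \<open>Y_{a,n-a}\<close> and \<open>0\<close> for \<open>K_n\<close>,
  tells these digraphs apart.\<close>

section \<open>Hermitian matrices with \<open>G\<^sup>2 = r G\<close>\<close>

definition hermitian_mat :: "complex mat \<Rightarrow> bool" where
  "hermitian_mat A \<longleftrightarrow> (\<forall>i<dim_row A. \<forall>j<dim_row A. A $$ (j, i) = cnj (A $$ (i, j)))"

definition mat_trace :: "'a::comm_ring_1 mat \<Rightarrow> 'a" where
  "mat_trace A = (\<Sum>i<dim_row A. A $$ (i, i))"

lemma mat_trace_mult_comm:
  assumes "A \<in> carrier_mat n m" and "B \<in> carrier_mat m n"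
  shows "mat_trace (A * B) = mat_trace (B * A)"
proof -
  have "mat_trace (A * B) = (\<Sum>i<n. \<Sum>k<m. A $$ (i, k) * B $$ (k, i))"
    using assms by (auto simp: mat_trace_def scalar_prod_def atLeast0LessThan intro!: sum.cong)
  also have "\<dots> = (\<Sum>k<m. \<Sum>i<n. B $$ (k, i) * A $$ (i, k))"
    by (subst sum.swap) (simp add: mult.commute)
  also have "\<dots> = mat_trace (B * A)"
    using assms by (auto simp: mat_trace_def scalar_prod_def atLeast0LessThan intro!: sum.cong)
  finally show ?thesis .
qed

lemma similar_mat_wit_mat_trace:
  assumes "similar_mat_wit A B P Q"
  shows "mat_trace A = mat_trace B"
proof -
  define n where "n = dim_row A"
  note wit = similar_mat_witD[OF n_def assms]
  have "mat_trace A = mat_trace (P * (B * Q))"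
    using wit(3,5-7) by (simp add: assoc_mult_mat[of _ n n _ n _ n])
  also have "\<dots> = mat_trace (B * Q * P)"
    using wit(5-7) by (intro mat_trace_mult_comm[of _ n n]) auto
  also have "\<dots> = mat_trace B"
    using wit(2,5-7) by (simp add: assoc_mult_mat[of _ n n _ n _ n])
  finally show ?thesis .
qed

lemma pow_mat_two: "A ^\<^sub>m 2 = A * A" if "A \<in> carrier_mat n n"
  using that by (simp add: numeral_2_eq_2)

lemma similar_mat_wit_mult_self:
  assumes "similar_mat_wit A B P Q"
  shows "similar_mat_wit (A * A) (B * B) P Q"
proof -
  note w = similar_mat_witD[OF refl assms]
  have "similar_mat_wit (A ^\<^sub>m 2) (B ^\<^sub>m 2) P Q"
    by (rule similar_mat_wit_pow[OF assms])
  then show ?thesis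
    unfolding pow_mat_two[OF w(4)] pow_mat_two[OF w(5)] .
qed

lemma similar_mat_wit_minus:
  fixes A :: "'a::comm_ring_1 mat"
  assumes "similar_mat_wit A B P Q" and "similar_mat_wit A' B' P Q" and "dim_row A' = dim_row A"
  shows "similar_mat_wit (A - A') (B - B') P Q"
proof -
  define n where "n = dim_row A"
  note w = similar_mat_witD[OF n_def assms(1)]
  note w' = similar_mat_witD[OF n_def[folded assms(3)] assms(2)]
  have "P * (B - B') * Q = P * B * Q - P * B' * Q"
  proof -
    have "P * (B - B') = P * B - P * B'"
      using w(6) w(5) w'(5) by (rule mult_minus_distrib_mat)
    then show ?thesis
      using w(5-7) w'(5) by (simp add: minus_mult_distrib_mat[of _ n n])
  qed
  then have "A - A' = P * (B - B') * Q"
    using w(3) w'(3) by simp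
  with w(1,2,4-7) w'(4,5) show ?thesis
    by (intro similar_mat_witI[of P Q n]) auto
qed

lemma hermitian_matD:
  "hermitian_mat A \<Longrightarrow> i < dim_row A \<Longrightarrow> j < dim_row A \<Longrightarrow> A $$ (j, i) = cnj (A $$ (i, j))"
  unfolding hermitian_mat_def by blast

lemma hermitian_mat_mult_self:
  assumes "A \<in> carrier_mat n n" and "hermitian_mat A"
  shows "hermitian_mat (A * A)"
  unfolding hermitian_mat_def
proof (intro allI impI)
  fix i j assume "i < dim_row (A * A)" "j < dim_row (A * A)"
  with assms(1) have ij: "i < n" "j < n" by auto
  have "(A * A) $$ (j, i) = (\<Sum>k<n. A $$ (j, k) * A $$ (k, i))"
    using assms(1) ij by (simp add: scalar_prod_def atLeast0LessThan)
  also have "\<dots> = (\<Sum>k<n. cnj (A $$ (i, k) * A $$ (k, j)))"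
  proof (intro sum.cong refl)
    fix k assume "k \<in> {..<n}"
    then have "A $$ (j, k) = cnj (A $$ (k, j))" "A $$ (k, i) = cnj (A $$ (i, k))"
      using assms ij by (auto intro: hermitian_matD)
    then show "A $$ (j, k) * A $$ (k, i) = cnj (A $$ (i, k) * A $$ (k, j))"
      by (simp add: mult.commute)
  qed
  also have "\<dots> = cnj ((A * A) $$ (i, j))"
    using assms(1) ij by (simp add: scalar_prod_def atLeast0LessThan)
  finally show "(A * A) $$ (j, i) = cnj ((A * A) $$ (i, j))" .
qed

lemma hermitian_mat_minus_smult:
  assumes "A \<in> carrier_mat n n" "B \<in> carrier_mat n n" "hermitian_mat A" "hermitian_mat B"
    and "cnj r = r"
  shows "hermitian_mat (A - r \<cdot>\<^sub>m B)"
  unfolding hermitian_mat_def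
proof (intro allI impI)
  fix i j assume "i < dim_row (A - r \<cdot>\<^sub>m B)" "j < dim_row (A - r \<cdot>\<^sub>m B)"
  with assms have ij: "i < n" "j < n" by auto
  have "A $$ (j, i) = cnj (A $$ (i, j))" "B $$ (j, i) = cnj (B $$ (i, j))"
    using assms ij by (auto intro: hermitian_matD)
  with assms ij show "(A - r \<cdot>\<^sub>m B) $$ (j, i) = cnj ((A - r \<cdot>\<^sub>m B) $$ (i, j))"
    by simp
qed

lemma hermitian_mat_trace_square:
  assumes "A \<in> carrier_mat n n" and "hermitian_mat A"
  shows "mat_trace (A * A) = of_real (\<Sum>i<n. \<Sum>j<n. (cmod (A $$ (i, j)))\<^sup>2)"
proof -
  have "mat_trace (A * A) = (\<Sum>i<n. \<Sum>j<n. A $$ (i, j) * A $$ (j, i))"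
    using assms(1) by (simp add: mat_trace_def scalar_prod_def atLeast0LessThan)
  also have "\<dots> = (\<Sum>i<n. \<Sum>j<n. of_real ((cmod (A $$ (i, j)))\<^sup>2))"
  proof (intro sum.cong refl)
    fix i j assume "i \<in> {..<n}" "j \<in> {..<n}"
    then have "A $$ (j, i) = cnj (A $$ (i, j))"
      using assms by (auto intro: hermitian_matD)
    then show "A $$ (i, j) * A $$ (j, i) = of_real ((cmod (A $$ (i, j)))\<^sup>2)"
      by (simp only: complex_norm_square)
  qed
  finally show ?thesis
    by simp
qed

lemma hermitian_mat_trace_square_eq_0:
  assumes "A \<in> carrier_mat n n" and "hermitian_mat A" and "mat_trace (A * A) = 0"
  shows "A = 0\<^sub>m n n"
proof -
  have "(\<Sum>i<n. \<Sum>j<n. (cmod (A $$ (i, j)))\<^sup>2) = 0"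
    using assms hermitian_mat_trace_square[OF assms(1,2)] by (simp del: of_real_sum)
  then have "\<forall>i<n. \<forall>j<n. (cmod (A $$ (i, j)))\<^sup>2 = 0"
    by (simp add: sum_nonneg_eq_0_iff sum_nonneg)
  then show ?thesis
    using assms(1) by (intro eq_matI) auto
qed

lemma mat_trace_square_strictly_upper_triangular:
  assumes "N \<in> carrier_mat n n" and "\<And>i j. i < n \<Longrightarrow> j \<le> i \<Longrightarrow> N $$ (i, j) = 0"
  shows "mat_trace (N * N) = 0"
proof -
  have "mat_trace (N * N) = (\<Sum>i<n. \<Sum>k<n. N $$ (i, k) * N $$ (k, i))"
    using assms(1) by (simp add: mat_trace_def scalar_prod_def atLeast0LessThan)
  also have "\<dots> = 0"
  proof (intro sum.neutral ballI)
    fix i k assume "i \<in> {..<n}" "k \<in> {..<n}"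
    then show "N $$ (i, k) * N $$ (k, i) = 0"
      using assms(2)[of i k] assms(2)[of k i] by (cases "k \<le> i") auto
  qed
  finally show ?thesis .
qed

lemma upper_triangular_square_minus_smult_lower:
  fixes B :: "'a::comm_ring_1 mat"
  assumes B: "B \<in> carrier_mat n n" "upper_triangular B"
    and diag: "B $$ (i, i) * B $$ (i, i) = r * B $$ (i, i)"
    and ij: "i < n" "j \<le> i"
  shows "(B * B - r \<cdot>\<^sub>m B) $$ (i, j) = 0"
proof -
  have lower: "B $$ (k, l) = 0" if "l < k" "k < n" for k l
    using upper_triangularD[OF B(2) that(1)] B(1) that(2) by simp
  have "(B * B) $$ (i, j) = (\<Sum>k<n. B $$ (i, k) * B $$ (k, j))"
    using B(1) ij by (simp add: scalar_prod_def atLeast0LessThan)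
  also have "\<dots> = (\<Sum>k<n. if k = i then B $$ (i, i) * B $$ (i, j) else 0)"
  proof (intro sum.cong refl)
    fix k assume "k \<in> {..<n}"
    then show "B $$ (i, k) * B $$ (k, j) = (if k = i then B $$ (i, i) * B $$ (i, j) else 0)"
      using ij by (cases k i rule: linorder_cases) (simp_all add: lower)
  qed
  also have "\<dots> = B $$ (i, i) * B $$ (i, j)"
    using ij by simp
  finally have "(B * B) $$ (i, j) = B $$ (i, i) * B $$ (i, j)" .
  then show ?thesis
    using B(1) ij diag lower[of j i] by (cases "j = i") auto
qed

text \<open>Schur-triangularise \<open>G\<close>; then \<open>M = G\<^sup>2 - r G\<close> is similar to the strictly upper triangular
  \<open>B\<^sup>2 - r B\<close>, so \<open>tr(M\<^sup>2) = 0\<close>, and for Hermitian \<open>M\<close> this trace is the squared Frobenius norm.\<close>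

lemma hermitian_mat_square_eq_smult:
  assumes G: "G \<in> carrier_mat n n" and herm: "hermitian_mat G" and real: "cnj r = r"
    and eigenvalues: "\<And>\<mu>. eigenvalue G \<mu> \<Longrightarrow> \<mu> = 0 \<or> \<mu> = r"
  shows "G * G = r \<cdot>\<^sub>m G"
proof -
  obtain es where cp: "char_poly G = (\<Prod>a\<leftarrow>es. [:- a, 1:])"
    using char_poly_factorized[OF G] by blast
  obtain B P Q where "schur_decomposition G es = (B, P, Q)"
    by (cases "schur_decomposition G es") auto
  with schur_decomposition[OF G cp] have sim: "similar_mat_wit G B P Q"
    and ut: "upper_triangular B" and diag_B: "diag_mat B = es"
    by auto
  have B: "B \<in> carrier_mat n n"
    using similar_mat_witD2[OF G sim] by auto
  have diag: "B $$ (i, i) * B $$ (i, i) = r * B $$ (i, i)" if "i < n" for i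
  proof -
    have "B $$ (i, i) \<in> set es"
      using that B diag_B by (auto simp: diag_mat_def)
    then have "poly (char_poly G) (B $$ (i, i)) = 0"
      by (auto simp: cp poly_prod_list prod_list_zero_iff)
    then have "B $$ (i, i) = 0 \<or> B $$ (i, i) = r"
      using eigenvalues eigenvalue_root_char_poly[OF G] by blast
    then show ?thesis
      by auto
  qed
  define M where "M = G * G - r \<cdot>\<^sub>m G"
  define N where "N = B * B - r \<cdot>\<^sub>m B"
  have M: "M \<in> carrier_mat n n"
    unfolding M_def using G by (intro minus_carrier_mat smult_carrier_mat)
  have "similar_mat_wit M N P Q"
    unfolding M_def N_def using G
    by (intro similar_mat_wit_minus similar_mat_wit_mult_self similar_mat_wit_smult sim) auto
  then have "mat_trace (M * M) = mat_trace (N * N)"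
    by (intro similar_mat_wit_mat_trace similar_mat_wit_mult_self)
  also have "\<dots> = 0"
    using B ut diag unfolding N_def
    by (intro mat_trace_square_strictly_upper_triangular upper_triangular_square_minus_smult_lower)
      auto
  finally have "mat_trace (M * M) = 0" .
  moreover have "hermitian_mat M"
    unfolding M_def using G herm real
    by (intro hermitian_mat_minus_smult[of _ n] hermitian_mat_mult_self) auto
  ultimately have M0: "M = 0\<^sub>m n n"
    using M by (intro hermitian_mat_trace_square_eq_0)
  show ?thesis
  proof (rule eq_matI)
    fix i j assume "i < dim_row (r \<cdot>\<^sub>m G)" "j < dim_col (r \<cdot>\<^sub>m G)"
    moreover from this have "M $$ (i, j) = 0"
      using G M0 by simp
    ultimately show "(G * G) $$ (i, j) = (r \<cdot>\<^sub>m G) $$ (i, j)"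
      using G by (simp add: M_def)
  qed (use G in auto)
qed

lemma eigenvalue_add_one_mat:
  assumes "A \<in> carrier_mat n n"
  shows "eigenvalue (A + 1\<^sub>m n) \<mu> \<longleftrightarrow> eigenvalue A (\<mu> - 1)"
proof -
  have "(A + 1\<^sub>m n) *\<^sub>v v = \<mu> \<cdot>\<^sub>v v \<longleftrightarrow> A *\<^sub>v v = (\<mu> - 1) \<cdot>\<^sub>v v"
    if "v \<in> carrier_vec n" for v
  proof -
    have "(A + 1\<^sub>m n) *\<^sub>v v = A *\<^sub>v v + v"
      using assms that by (simp add: add_mult_distrib_mat_vec[of _ n n])
    then show ?thesis
      using assms that by (auto simp: vec_eq_iff algebra_simps)
  qed
  then show ?thesis
    using assms by (auto simp: eigenvalue_def eigenvector_def)
qed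

lemma eigenvalue_mult_self_eq_smult:
  fixes A :: "'a::idom mat"
  assumes A: "A \<in> carrier_mat n n" and idem: "A * A = r \<cdot>\<^sub>m A" and "eigenvalue A \<mu>"
  shows "\<mu> = 0 \<or> \<mu> = r"
proof -
  obtain v where ev: "eigenvector A v \<mu>"
    using assms(3) by (auto simp: eigenvalue_def)
  then have v: "v \<in> carrier_vec n" "v \<noteq> 0\<^sub>v n" and Av: "A *\<^sub>v v = \<mu> \<cdot>\<^sub>v v"
    using A by (auto simp: eigenvector_def)
  obtain i where i: "i < n" "v $ i \<noteq> 0"
    using v by (metis eq_vecI carrier_vecD index_zero_vec)
  have "\<mu> ^ 2 * v $ i = ((A * A) *\<^sub>v v) $ i"
    using eigenvector_pow[OF A ev, of 2] i v by (simp add: pow_mat_two[OF A])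
  also have "\<dots> = r * (A *\<^sub>v v) $ i"
    using idem i v A by simp
  also have "\<dots> = r * \<mu> * v $ i"
    using Av i v by simp
  finally have "\<mu> * (\<mu> - r) * v $ i = 0"
    by (simp add: algebra_simps power2_eq_square)
  then show ?thesis
    using i(2) by simp
qed

lemma sum_eq_card_imp_eq_1:
  fixes u :: "'a \<Rightarrow> complex"
  assumes "finite S" and bound: "\<And>k. k \<in> S \<Longrightarrow> cmod (u k) \<le> 1"
    and sum: "(\<Sum>k\<in>S. u k) = of_nat (card S)" and "j \<in> S"
  shows "u j = 1"
proof -
  have Re_le: "Re (u k) \<le> 1" if "k \<in> S" for k
    using complex_Re_le_cmod[of "u k"] bound[OF that] by linarith
  have "(\<Sum>k\<in>S. 1 - Re (u k)) = 0"
    using arg_cong[OF sum, of Re] by (simp add: sum_subtractf Re_sum)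
  then have "Re (u j) = 1"
    using assms(1,4) Re_le by (subst (asm) sum_nonneg_eq_0_iff) auto
  moreover have "(Re (u j))\<^sup>2 + (Im (u j))\<^sup>2 \<le> 1"
    using bound[OF assms(4)] by (simp add: cmod_def power_le_one_iff)
  ultimately show ?thesis
    by (simp add: complex_eq_iff)
qed

lemma hermitian_mat_square_eq_smult_rank_one:
  assumes G: "G \<in> carrier_mat n n" "hermitian_mat G" "G * G = of_nat n \<cdot>\<^sub>m G"
    and diag: "\<And>i. i < n \<Longrightarrow> G $$ (i, i) = 1"
    and bound: "\<And>i j. i < n \<Longrightarrow> j < n \<Longrightarrow> cmod (G $$ (i, j)) \<le> 1"
    and ij: "i < n" "j < n"
  shows "cmod (G $$ (i, j)) = 1" and "G $$ (i, j) = G $$ (i, 0) * cnj (G $$ (j, 0))"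
proof -
  have square: "(\<Sum>l<n. G $$ (i, l) * G $$ (l, k)) = of_nat n * G $$ (i, k)"
    if "i < n" "k < n" for i k
    using arg_cong[OF G(3), of "\<lambda>A. A $$ (i, k)"] G(1) that
    by (simp add: scalar_prod_def atLeast0LessThan)
  have unit: "G $$ (i, j) * cnj (G $$ (i, j)) = 1" if "i < n" "j < n" for i j
  proof -
    have "(\<Sum>l<n. G $$ (i, l) * G $$ (l, i)) = of_nat (card {..<n})"
      using square[of i i] diag that by simp
    then have "G $$ (i, j) * G $$ (j, i) = 1"
      using that bound
      by (intro sum_eq_card_imp_eq_1[where S = "{..<n}" and u = "\<lambda>l. G $$ (i, l) * G $$ (l, i)"])
        (auto simp: norm_mult mult_le_one)
    then show ?thesis
      using hermitian_matD[OF G(2), of i j] G(1) that by simp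
  qed
  have "(cmod (G $$ (i, j)))\<^sup>2 = 1"
    using unit[OF ij] complex_norm_square[of "G $$ (i, j)"] by (metis of_real_eq_1_iff)
  then show "cmod (G $$ (i, j)) = 1"
    using norm_ge_zero[of "G $$ (i, j)"] by (auto simp: power2_eq_1_iff)
  have "(\<Sum>l<n. G $$ (i, l) * G $$ (l, 0) * cnj (G $$ (i, 0)))
      = (\<Sum>l<n. G $$ (i, l) * G $$ (l, 0)) * cnj (G $$ (i, 0))"
    by (simp add: sum_distrib_right)
  also have "\<dots> = of_nat n * (G $$ (i, 0) * cnj (G $$ (i, 0)))"
    using square[of i 0] ij by simp
  also have "\<dots> = of_nat (card {..<n})"
    using unit[of i 0] ij by simp
  finally have "(\<Sum>l<n. G $$ (i, l) * G $$ (l, 0) * cnj (G $$ (i, 0))) = of_nat (card {..<n})" .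
  then have "G $$ (i, j) * G $$ (j, 0) * cnj (G $$ (i, 0)) = 1"
    using ij bound
    by (intro sum_eq_card_imp_eq_1[where S = "{..<n}"
          and u = "\<lambda>l. G $$ (i, l) * G $$ (l, 0) * cnj (G $$ (i, 0))"])
      (auto simp: norm_mult mult_le_one)
  then have "G $$ (i, j) * (G $$ (j, 0) * cnj (G $$ (j, 0))) * (G $$ (i, 0) * cnj (G $$ (i, 0)))
      = G $$ (i, 0) * cnj (G $$ (j, 0))"
    by (simp add: ac_simps)
  then show "G $$ (i, j) = G $$ (i, 0) * cnj (G $$ (j, 0))"
    using unit[of j 0] unit[of i 0] ij by simp
qed

section \<open>Hermitian adjacency matrices\<close>

lemma similar_mat_diagonal_unitary:
  assumes A: "A \<in> carrier_mat n n" and B: "B \<in> carrier_mat n n"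
    and unit: "\<And>i. i < n \<Longrightarrow> v i * cnj (v i) = 1"
    and entries: "\<And>i j. i < n \<Longrightarrow> j < n \<Longrightarrow> A $$ (i, j) = v i * B $$ (i, j) * cnj (v j)"
  shows "similar_mat A B"
proof (rule similar_matI)
  let ?P = "mat_diag n v" and ?Q = "mat_diag n (\<lambda>i. cnj (v i))"
  show "?P * ?Q = 1\<^sub>m n" "?Q * ?P = 1\<^sub>m n"
    unfolding mat_diag_diag using unit by (auto simp: mat_diag_def mult.commute intro!: eq_matI)
  have "?P * B * ?Q = mat n n (\<lambda>(i, j). v i * B $$ (i, j) * cnj (v j))"
    using B by (auto simp: mat_diag_mult_left[of _ n n] mat_diag_mult_right[of _ n n] intro!: eq_matI)
  then show "A = ?P * B * ?Q"
    using A entries by (auto intro!: eq_matI)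
qed (use A B in auto)

lemma herm_adj_dim [simp]: "dim_row (herm_adj n E) = n" "dim_col (herm_adj n E) = n"
  by (simp_all add: herm_adj_def)

lemma herm_adj_carrier [simp]: "herm_adj n E \<in> carrier_mat n n"
  by (simp add: carrier_matI)

lemma herm_adj_index:
  "i < n \<Longrightarrow> j < n \<Longrightarrow> herm_adj n E $$ (i, j) =
    (if (i, j) \<in> E \<and> (j, i) \<in> E then 1 else if (i, j) \<in> E then \<i>
     else if (j, i) \<in> E then - \<i> else 0)"
  by (simp add: herm_adj_def)

lemma hermitian_mat_herm_adj: "hermitian_mat (herm_adj n E)"
  by (auto simp: hermitian_mat_def herm_adj_def)

lemma size_H_spectrum: "size (H_spectrum n E) = n"
  using degree_monic_char_poly[OF herm_adj_carrier[of n E]]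
  by (simp add: H_spectrum_def size_proots_complex)

lemma eigenvalue_herm_adj_iff: "eigenvalue (herm_adj n E) \<mu> \<longleftrightarrow> \<mu> \<in># H_spectrum n E"
proof -
  have "char_poly (herm_adj n E) \<noteq> 0"
    using degree_monic_char_poly[OF herm_adj_carrier[of n E]] by auto
  then show ?thesis
    by (simp add: H_spectrum_def eigenvalue_root_char_poly[OF herm_adj_carrier])
qed

lemma herm_adj_complete_digraph_plus_one:
  "herm_adj n (complete_digraph n) + 1\<^sub>m n = mat n n (\<lambda>_. 1)"
  by (auto simp: herm_adj_index complete_digraph_def intro!: eq_matI)

lemma all_ones_mat_square:
  "mat n n (\<lambda>_. 1) * mat n n (\<lambda>_. 1) = of_nat n \<cdot>\<^sub>m mat n n (\<lambda>_. 1::'a::comm_ring_1)"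
  by (auto simp: scalar_prod_def intro!: eq_matI)

lemma eigenvalue_complete_digraph_plus_one:
  assumes "eigenvalue (herm_adj n (complete_digraph n) + 1\<^sub>m n) \<mu>"
  shows "\<mu> = 0 \<or> \<mu> = of_nat n"
  using assms all_ones_mat_square
  unfolding herm_adj_complete_digraph_plus_one
  by (intro eigenvalue_mult_self_eq_smult[of _ n]) auto

text \<open>The relabelling-invariant form of \<open>Y_digraph\<close>: \<open>A\<close> plays the role of \<open>{0..<a}\<close>.\<close>

definition Y_shaped :: "nat \<Rightarrow> nat set \<Rightarrow> (nat \<times> nat) set \<Rightarrow> bool" where
  "Y_shaped n A E \<longleftrightarrow> (\<forall>u<n. \<forall>w<n. u \<noteq> w \<longrightarrow> ((u, w) \<in> E \<longleftrightarrow> u \<in> A \<or> w \<notin> A))"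

definition switching :: "nat set \<Rightarrow> nat \<Rightarrow> complex" where
  "switching A u = (if u \<in> A then \<i> else 1)"

lemma herm_adj_Y_shaped:
  assumes "is_digraph n E" and "Y_shaped n A E" and "i < n" "j < n"
  shows "herm_adj n E $$ (i, j)
    = switching A i * herm_adj n (complete_digraph n) $$ (i, j) * cnj (switching A j)"
proof (cases "i = j")
  case True
  with assms show ?thesis
    by (simp add: herm_adj_index is_digraph_def complete_digraph_def)
next
  case False
  with assms have "(i, j) \<in> E \<longleftrightarrow> i \<in> A \<or> j \<notin> A" "(j, i) \<in> E \<longleftrightarrow> j \<in> A \<or> i \<notin> A"
    by (auto simp: Y_shaped_def)
  with False assms(3,4) show ?thesis
    by (auto simp: herm_adj_index complete_digraph_def switching_def)
qed

lemma H_spectrum_Y_shaped: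
  assumes "is_digraph n E" and "Y_shaped n A E"
  shows "H_spectrum n E = H_spectrum n (complete_digraph n)"
proof -
  have "similar_mat (herm_adj n E) (herm_adj n (complete_digraph n))"
    using herm_adj_Y_shaped[OF assms]
    by (intro similar_mat_diagonal_unitary[where n = n and v = "switching A"]) (auto simp: switching_def)
  then show ?thesis
    by (simp add: H_spectrum_def char_poly_similar)
qed

lemma unimodular_rank_one_switching:
  assumes unimodular: "\<And>u. u < n \<Longrightarrow> v u \<in> {1, \<i>, - \<i>}"
    and no_minus_one: "\<And>u w. u < n \<Longrightarrow> w < n \<Longrightarrow> v u * cnj (v w) \<noteq> - 1"
  shows "\<exists>A \<subseteq> {0..<n}. \<forall>u<n. \<forall>w<n.
    v u * cnj (v w) = switching A u * cnj (switching A w)"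
proof (cases "\<exists>w<n. v w = - \<i>")
  case True
  \<comment> \<open>then \<open>\<i>\<close> does not occur, as \<open>\<i> * cnj (- \<i>) = -1\<close>; the switching set describes \<open>\<i> * v\<close>\<close>
  then obtain w0 where w0: "w0 < n" "v w0 = - \<i>"
    by blast
  have v_cases: "v u = 1 \<or> v u = - \<i>" if "u < n" for u
    using unimodular[OF that] no_minus_one[OF that w0(1)] w0(2) by auto
  define A where "A = {u. u < n \<and> v u = 1}"
  have "v u * cnj (v w) = switching A u * cnj (switching A w)" if "u < n" "w < n" for u w
    using v_cases[OF that(1)] v_cases[OF that(2)] that by (auto simp: A_def switching_def)
  then show ?thesis
    by (intro exI[of _ A]) (auto simp: A_def)
next
  case False
  then have v_cases: "v u = 1 \<or> v u = \<i>" if "u < n" for u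
    using unimodular[OF that] that by auto
  define A where "A = {u. u < n \<and> v u = \<i>}"
  have "v u * cnj (v w) = switching A u * cnj (switching A w)" if "u < n" "w < n" for u w
    using v_cases[OF that(1)] v_cases[OF that(2)] that by (auto simp: A_def switching_def)
  then show ?thesis
    by (intro exI[of _ A]) (auto simp: A_def)
qed

lemma hermitian_mat_plus_one:
  assumes "A \<in> carrier_mat n n" and "hermitian_mat A"
  shows "hermitian_mat (A + 1\<^sub>m n)"
  unfolding hermitian_mat_def
proof (intro allI impI)
  fix i j assume "i < dim_row (A + 1\<^sub>m n)" "j < dim_row (A + 1\<^sub>m n)"
  with assms show "(A + 1\<^sub>m n) $$ (j, i) = cnj ((A + 1\<^sub>m n) $$ (i, j))"
    using hermitian_matD[OF assms(2), of i j] by auto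
qed

lemma cospectral_complete_digraph_square:
  assumes "H_spectrum n E = H_spectrum n (complete_digraph n)"
  defines "G \<equiv> herm_adj n E + 1\<^sub>m n"
  shows "G * G = of_nat n \<cdot>\<^sub>m G"
proof (rule hermitian_mat_square_eq_smult)
  show "G \<in> carrier_mat n n" "hermitian_mat G"
    unfolding G_def using hermitian_mat_herm_adj by (auto intro: hermitian_mat_plus_one)
  show "\<mu> = 0 \<or> \<mu> = of_nat n" if "eigenvalue G \<mu>" for \<mu>
    using that assms(1) unfolding G_def
    by (intro eigenvalue_complete_digraph_plus_one)
      (simp add: eigenvalue_add_one_mat eigenvalue_herm_adj_iff)
qed simp

lemma herm_adj_square_imp_Y_shaped:
  assumes E: "is_digraph n E"
    and square: "(herm_adj n E + 1\<^sub>m n) * (herm_adj n E + 1\<^sub>m n) = of_nat n \<cdot>\<^sub>m (herm_adj n E + 1\<^sub>m n)"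
  shows "\<exists>A \<subseteq> {0..<n}. Y_shaped n A E"
proof -
  define G where "G = herm_adj n E + 1\<^sub>m n"
  have G: "G \<in> carrier_mat n n" "hermitian_mat G"
    unfolding G_def using hermitian_mat_herm_adj by (auto intro: hermitian_mat_plus_one)
  have index: "G $$ (u, w) = herm_adj n E $$ (u, w) + (if u = w then 1 else 0)"
    if "u < n" "w < n" for u w
    using that by (simp add: G_def)
  have entries: "G $$ (u, w) \<in> {0, 1, \<i>, - \<i>}" if "u < n" "w < n" for u w
    using E that by (auto simp: index herm_adj_index is_digraph_def)
  have diag: "G $$ (u, u) = 1" if "u < n" for u
    using E that by (simp add: index herm_adj_index is_digraph_def)
  have bound: "cmod (G $$ (u, w)) \<le> 1" if "u < n" "w < n" for u w
    using entries[OF that] by auto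
  have unit: "cmod (G $$ (u, w)) = 1"
    and rank_one: "G $$ (u, w) = G $$ (u, 0) * cnj (G $$ (w, 0))" if "u < n" "w < n" for u w
    using hermitian_mat_square_eq_smult_rank_one[OF G square[folded G_def] diag bound that] by auto
  have "\<exists>A \<subseteq> {0..<n}. \<forall>u<n. \<forall>w<n.
      G $$ (u, 0) * cnj (G $$ (w, 0)) = switching A u * cnj (switching A w)"
  proof (rule unimodular_rank_one_switching)
    fix u w assume "u < n" "w < n"
    then show "G $$ (u, 0) \<in> {1, \<i>, - \<i>}"
      using entries[of u 0] unit[of u 0] by auto
    show "G $$ (u, 0) * cnj (G $$ (w, 0)) \<noteq> - 1"
      using entries[of u w] rank_one[of u w] \<open>u < n\<close> \<open>w < n\<close> by (auto simp: complex_eq_iff)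
  qed
  then obtain A where A: "A \<subseteq> {0..<n}"
    and G_switching: "\<And>u w. u < n \<Longrightarrow> w < n \<Longrightarrow> G $$ (u, w) = switching A u * cnj (switching A w)"
    using rank_one by metis
  have "Y_shaped n A E"
    unfolding Y_shaped_def
  proof (intro allI impI)
    fix u w assume uw: "u < n" "w < n" "u \<noteq> w"
    then have "(u, w) \<in> E \<longleftrightarrow> G $$ (u, w) \<in> {1, \<i>}"
      by (auto simp: index herm_adj_index complex_eq_iff)
    then show "(u, w) \<in> E \<longleftrightarrow> u \<in> A \<or> w \<notin> A"
      using G_switching[OF uw(1,2)] by (auto simp: switching_def complex_eq_iff)
  qed
  with A show ?thesis
    by blast
qed

lemma cospectral_complete_digraph_imp_Y_shaped:
  assumes "is_digraph n E" and "H_spectrum n E = H_spectrum n (complete_digraph n)"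
  shows "\<exists>A \<subseteq> {0..<n}. Y_shaped n A E"
  using assms by (intro herm_adj_square_imp_Y_shaped cospectral_complete_digraph_square)

section \<open>Digraphs isomorphic to \<open>Y_{a,n-a}\<close>\<close>

lemma Y_digraph_mem:
  "u < n \<Longrightarrow> w < n \<Longrightarrow> (u, w) \<in> Y_digraph a n \<longleftrightarrow> u \<noteq> w \<and> (u < a \<or> a \<le> w)"
  by (auto simp: Y_digraph_def)

lemma Y_digraph_eq_complete_digraph: "a = 0 \<or> n \<le> a \<Longrightarrow> Y_digraph a n = complete_digraph n"
  by (auto simp: Y_digraph_def complete_digraph_def)

lemma iso_Y_digraph_imp_Y_shaped:
  assumes "digraph_iso n E (Y_digraph a n)"
  shows "\<exists>A. Y_shaped n A E"
proof -
  obtain f where f: "bij_betw f {0..<n} {0..<n}"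
    and arcs: "\<And>u w. u < n \<Longrightarrow> w < n \<Longrightarrow> (u, w) \<in> E \<longleftrightarrow> (f u, f w) \<in> Y_digraph a n"
    using assms by (auto simp: digraph_iso_def)
  have "Y_shaped n {u. f u < a} E"
    unfolding Y_shaped_def
  proof (intro allI impI)
    fix u w assume uw: "u < n" "w < n" "u \<noteq> w"
    with f have "f u < n" "f w < n" "f u \<noteq> f w"
      using bij_betw_apply[OF f] inj_on_eq_iff[OF bij_betw_imp_inj_on[OF f]] by auto
    with arcs[OF uw(1,2)] show "(u, w) \<in> E \<longleftrightarrow> u \<in> {u. f u < a} \<or> w \<notin> {u. f u < a}"
      by (auto simp: Y_digraph_mem)
  qed
  then show ?thesis ..
qed

lemma ex_bij_betw_onto_prefix:
  assumes A: "A \<subseteq> {0..<n}"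
  shows "\<exists>f. bij_betw f {0..<n} {0..<n} \<and> (\<forall>u<n. f u < card A \<longleftrightarrow> u \<in> A)"
proof -
  define a where "a = card A"
  have "finite A"
    using A finite_subset by blast
  then obtain g where g: "bij_betw g A {0..<a}"
    using ex_bij_betw_finite_nat unfolding a_def by blast
  have "card ({0..<n} - A) = card {a..<n}"
    using A \<open>finite A\<close> by (simp add: card_Diff_subset a_def)
  then obtain h where h: "bij_betw h ({0..<n} - A) {a..<n}"
    using bij_betw_iff_card[of "{0..<n} - A" "{a..<n}"] by auto
  define f where "f u = (if u \<in> A then g u else h u)" for u
  have fA: "bij_betw f A {0..<a}"
    using g by (rule bij_betw_cong[THEN iffD1, rotated]) (simp add: f_def)
  have fB: "bij_betw f ({0..<n} - A) {a..<n}"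
    using h by (rule bij_betw_cong[THEN iffD1, rotated]) (simp add: f_def)
  have "a \<le> n"
    unfolding a_def using card_mono[OF _ A] by simp
  have "bij_betw f (A \<union> ({0..<n} - A)) ({0..<a} \<union> {a..<n})"
    by (rule bij_betw_combine[OF fA fB]) auto
  moreover have "A \<union> ({0..<n} - A) = {0..<n}" "{0..<a} \<union> {a..<n} = {0..<n}"
    using A \<open>a \<le> n\<close> by auto
  ultimately have "bij_betw f {0..<n} {0..<n}"
    by simp
  moreover have "f u < a \<longleftrightarrow> u \<in> A" if "u < n" for u
  proof (cases "u \<in> A")
    case True
    then show ?thesis
      using bij_betw_apply[OF fA] by auto
  next
    case False
    then have "f u \<in> {a..<n}"
      using bij_betw_apply[OF fB] that by auto
    with False show ?thesis
      by auto
  qed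
  ultimately show ?thesis
    unfolding a_def by blast
qed

lemma Y_shaped_imp_iso_Y_digraph:
  assumes E: "is_digraph n E" and A: "A \<subseteq> {0..<n}" and Y: "Y_shaped n A E"
  shows "digraph_iso n E (Y_digraph (card A) n)"
proof -
  obtain f where f: "bij_betw f {0..<n} {0..<n}" and tail_side: "\<And>u. u < n \<Longrightarrow> f u < card A \<longleftrightarrow> u \<in> A"
    using ex_bij_betw_onto_prefix[OF A] by blast
  show ?thesis
    unfolding digraph_iso_def
  proof (intro exI[of _ f] conjI f ballI)
    fix u w assume uw: "u \<in> {0..<n}" "w \<in> {0..<n}"
    then have "f u < n" "f w < n" "f u = f w \<longleftrightarrow> u = w"
      using bij_betw_apply[OF f] inj_on_eq_iff[OF bij_betw_imp_inj_on[OF f]] by auto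
    moreover have "(u, w) \<in> E \<longleftrightarrow> u \<noteq> w \<and> (u \<in> A \<or> w \<notin> A)"
      using Y E uw unfolding Y_shaped_def is_digraph_def by auto
    ultimately show "(u, w) \<in> E \<longleftrightarrow> (f u, f w) \<in> Y_digraph (card A) n"
      using tail_side[of u] tail_side[of w] uw by (auto simp: Y_digraph_mem)
  qed
qed

lemma cospectral_complete_digraph_iff:
  assumes "is_digraph m E"
  shows "H_spectrum m E = H_spectrum n (complete_digraph n)
    \<longleftrightarrow> m = n \<and> (\<exists>a\<le>n. digraph_iso n E (Y_digraph a n))"
proof
  assume spectrum: "H_spectrum m E = H_spectrum n (complete_digraph n)"
  then have "m = n"
    using size_H_spectrum by metis
  with assms spectrum obtain A where A: "A \<subseteq> {0..<n}" and "Y_shaped n A E"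
    using cospectral_complete_digraph_imp_Y_shaped by blast
  with assms \<open>m = n\<close> have "digraph_iso n E (Y_digraph (card A) n)"
    by (intro Y_shaped_imp_iso_Y_digraph) auto
  moreover have "card A \<le> n"
    using card_mono[OF _ A] by simp
  ultimately show "m = n \<and> (\<exists>a\<le>n. digraph_iso n E (Y_digraph a n))"
    using \<open>m = n\<close> by blast
next
  assume "m = n \<and> (\<exists>a\<le>n. digraph_iso n E (Y_digraph a n))"
  with assms show "H_spectrum m E = H_spectrum n (complete_digraph n)"
    using iso_Y_digraph_imp_Y_shaped H_spectrum_Y_shaped by blast
qed

lemma ex_iso_Y_digraph_iff:
  "(\<exists>a\<le>n. digraph_iso n E (Y_digraph a n)) \<longleftrightarrow>
    digraph_iso n E (complete_digraph n) \<or> (\<exists>a. 1 \<le> a \<and> a \<le> n - 1 \<and> digraph_iso n E (Y_digraph a n))"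
proof
  assume "\<exists>a\<le>n. digraph_iso n E (Y_digraph a n)"
  then obtain a where "a \<le> n" "digraph_iso n E (Y_digraph a n)"
    by blast
  then show "digraph_iso n E (complete_digraph n) \<or>
      (\<exists>a. 1 \<le> a \<and> a \<le> n - 1 \<and> digraph_iso n E (Y_digraph a n))"
    using Y_digraph_eq_complete_digraph[of a n] by (cases "a = 0 \<or> a = n") auto
next
  assume "digraph_iso n E (complete_digraph n) \<or>
      (\<exists>a. 1 \<le> a \<and> a \<le> n - 1 \<and> digraph_iso n E (Y_digraph a n))"
  then show "\<exists>a\<le>n. digraph_iso n E (Y_digraph a n)"
    using Y_digraph_eq_complete_digraph[of 0 n] by (metis le0 diff_le_self order_trans)
qed

lemma bij_betw_card_Collect:
  assumes f: "bij_betw f S T" and P: "\<And>u. u \<in> S \<Longrightarrow> P u \<longleftrightarrow> Q (f u)"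
  shows "card {u \<in> S. P u} = card {x \<in> T. Q x}"
proof -
  have image: "f ` {u \<in> S. P u} = {x \<in> T. Q x}"
    using bij_betw_imp_surj_on[OF f] bij_betw_apply[OF f] P by auto
  have "bij_betw f {u \<in> S. P u} {x \<in> T. Q x}"
    by (rule bij_betw_subset[OF f _ image]) auto
  then show ?thesis
    by (rule bij_betw_same_card)
qed

definition single_arc_tails :: "nat \<Rightarrow> (nat \<times> nat) set \<Rightarrow> nat set" where
  "single_arc_tails n E = {u \<in> {0..<n}. \<exists>w\<in>{0..<n}. (u, w) \<in> E \<and> (w, u) \<notin> E}"

lemma digraph_iso_card_single_arc_tails:
  assumes "digraph_iso n E F"
  shows "card (single_arc_tails n E) = card (single_arc_tails n F)"
proof -
  obtain f where f: "bij_betw f {0..<n} {0..<n}"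
    and arcs: "\<And>u w. u < n \<Longrightarrow> w < n \<Longrightarrow> (u, w) \<in> E \<longleftrightarrow> (f u, f w) \<in> F"
    using assms by (auto simp: digraph_iso_def)
  show ?thesis
    unfolding single_arc_tails_def
  proof (rule bij_betw_card_Collect[OF f])
    fix u assume u: "u \<in> {0..<n}"
    then have "(\<exists>w\<in>{0..<n}. (u, w) \<in> E \<and> (w, u) \<notin> E)
        \<longleftrightarrow> (\<exists>w\<in>{0..<n}. (f u, f w) \<in> F \<and> (f w, f u) \<notin> F)"
      using arcs by auto
    also have "\<dots> \<longleftrightarrow> (\<exists>w\<in>f ` {0..<n}. (f u, w) \<in> F \<and> (w, f u) \<notin> F)"
      by blast
    finally show "(\<exists>w\<in>{0..<n}. (u, w) \<in> E \<and> (w, u) \<notin> E)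
        \<longleftrightarrow> (\<exists>w\<in>{0..<n}. (f u, w) \<in> F \<and> (w, f u) \<notin> F)"
      unfolding bij_betw_imp_surj_on[OF f] .
  qed
qed

lemma single_arc_tails_Y_digraph:
  assumes "a < n"
  shows "single_arc_tails n (Y_digraph a n) = {0..<a}"
  using assms by (auto simp: single_arc_tails_def Y_digraph_mem intro!: bexI[of _ "n - 1"])

lemma Y_digraph_not_iso:
  assumes "a < n" and "b < n" and "a \<noteq> b"
  shows "\<not> digraph_iso n (Y_digraph a n) (Y_digraph b n)"
proof
  assume "digraph_iso n (Y_digraph a n) (Y_digraph b n)"
  from digraph_iso_card_single_arc_tails[OF this] show False
    using assms by (simp add: single_arc_tails_Y_digraph)
qed

theorem proposition8p6:
  fixes n :: nat
  assumes "n \<ge> 1"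
  shows "(\<forall>m E. is_digraph m E \<longrightarrow>
            (H_spectrum m E = H_spectrum n (complete_digraph n) \<longleftrightarrow>
              m = n \<and> (digraph_iso n E (complete_digraph n) \<or>
                        (\<exists>a. 1 \<le> a \<and> a \<le> n - 1 \<and> digraph_iso n E (Y_digraph a n)))))
         \<and> (\<forall>a. 1 \<le> a \<and> a \<le> n - 1 \<longrightarrow> \<not> digraph_iso n (Y_digraph a n) (complete_digraph n))
         \<and> (\<forall>a b. 1 \<le> a \<and> a \<le> n - 1 \<and> 1 \<le> b \<and> b \<le> n - 1 \<and> a \<noteq> b \<longrightarrow>
                  \<not> digraph_iso n (Y_digraph a n) (Y_digraph b n))"
proof (intro conjI allI impI)
  fix m E assume "is_digraph m E"
  then show "H_spectrum m E = H_spectrum n (complete_digraph n) \<longleftrightarrow>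
      m = n \<and> (digraph_iso n E (complete_digraph n) \<or>
               (\<exists>a. 1 \<le> a \<and> a \<le> n - 1 \<and> digraph_iso n E (Y_digraph a n)))"
    by (simp add: cospectral_complete_digraph_iff ex_iso_Y_digraph_iff)
next
  fix a assume "1 \<le> a \<and> a \<le> n - 1"
  with assms have "0 < a" "a < n"
    by auto
  then show "\<not> digraph_iso n (Y_digraph a n) (complete_digraph n)"
    using Y_digraph_not_iso[of a n 0] Y_digraph_eq_complete_digraph[of 0 n] by simp
next
  fix a b assume "1 \<le> a \<and> a \<le> n - 1 \<and> 1 \<le> b \<and> b \<le> n - 1 \<and> a \<noteq> b"
  with assms have "a < n" "b < n" "a \<noteq> b"
    by auto
  then show "\<not> digraph_iso n (Y_digraph a n) (Y_digraph b n)"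
    by (rule Y_digraph_not_iso)
qed

end
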